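(* Let $\mathcal{S}=\langle\mathcal{L},\vdash\rangle$ be a logical structure and $\varrho,\sigma\subseteq\mathcal{P}(\mathcal{L})\times\mathcal{L}$. If $\sigma$ is downward directed, then $(\vdash^\varrho)^\sigma\,\subseteq\,(\vdash^\sigma)^\varrho$. Hence, if both $\varrho$ and $\sigma$ are downward directed, then $(\vdash^\varrho)^\sigma\,=\,(\vdash^\sigma)^\varrho$.
   Context: A logical structure is a pair $\langle\mathcal{L},\vdash\rangle$ with $\mathcal{L}$ a set and $\vdash\subseteq\mathcal{P}(\mathcal{L})\times\mathcal{L}$ arbitrary. For $\varrho\subseteq\mathcal{P}(\mathcal{L})\times\mathcal{L}$: $\Gamma\vdash^\varrho\alpha$ iff there is $\Delta\subseteq\Gamma$ with $(\Delta,\alpha)\in\varrho$ and $\Delta\vdash\alpha$. $(\vdash^\varrho)^\sigma$ is the $\sigma$-companion of $\langle\mathcal{L},\vdash^\varrho\rangle$. A relation $\varrho\subseteq\mathcal{P}(\mathcal{L})\times\mathcal{L}$ is downward directed if $(\Delta,\alpha)\in\varrho$ implies $(\Delta',\alpha)\in\varrho$ for all $\Delta'\subseteq\Delta$. *)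

theory Defs
  imports Main
begin

text \<open>A logical structure over a language of type 'a is represented by its
consequence relation, a set of pairs (Gamma, alpha) with Gamma a set of formulas.\<close>

type_synonym 'a cons_rel = "('a set \<times> 'a) set"

definition companion :: "'a cons_rel \<Rightarrow> 'a cons_rel \<Rightarrow> 'a cons_rel" where
  "companion turnstile rho = {(\<Gamma>, \<alpha>). \<exists>\<Delta>. \<Delta> \<subseteq> \<Gamma> \<and> (\<Delta>, \<alpha>) \<in> rho \<and> (\<Delta>, \<alpha>) \<in> turnstile}"

definition downward_directed :: "'a cons_rel \<Rightarrow> bool" where
  "downward_directed rho \<longleftrightarrow> (\<forall>\<Delta> \<alpha> \<Delta>'. (\<Delta>, \<alpha>) \<in> rho \<longrightarrow> \<Delta>' \<subseteq> \<Delta> \<longrightarrow> (\<Delta>', \<alpha>) \<in> rho)"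

end

theory Submission
  imports Defs
begin

lemma mem_companion_iff:
  "(\<Gamma>, \<alpha>) \<in> companion turnstile rho \<longleftrightarrow> (\<exists>\<Delta>\<subseteq>\<Gamma>. (\<Delta>, \<alpha>) \<in> rho \<and> (\<Delta>, \<alpha>) \<in> turnstile)"
  unfolding companion_def by blast

lemma downward_directedD:
  "downward_directed rho \<Longrightarrow> (\<Delta>, \<alpha>) \<in> rho \<Longrightarrow> \<Delta>' \<subseteq> \<Delta> \<Longrightarrow> (\<Delta>', \<alpha>) \<in> rho"
  unfolding downward_directed_def by blast

text \<open>A witness \<open>\<Delta>' \<subseteq> \<Delta> \<subseteq> \<Gamma>\<close> of \<open>(\<vdash>\<^sup>\<rho>)\<^sup>\<sigma>\<close> already lies in \<open>\<sigma>\<close>,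
  so it serves as a witness for \<open>(\<vdash>\<^sup>\<sigma>)\<^sup>\<rho>\<close> on both levels.\<close>

lemma companion_companion_subset_swap:
  assumes "downward_directed sigma"
  shows "companion (companion turnstile rho) sigma \<subseteq> companion (companion turnstile sigma) rho"
proof clarify
  fix \<Gamma> \<alpha>
  assume "(\<Gamma>, \<alpha>) \<in> companion (companion turnstile rho) sigma"
  then obtain \<Delta> \<Delta>' where "\<Delta> \<subseteq> \<Gamma>" "(\<Delta>, \<alpha>) \<in> sigma" "\<Delta>' \<subseteq> \<Delta>"
      "(\<Delta>', \<alpha>) \<in> rho" "(\<Delta>', \<alpha>) \<in> turnstile"
    by (auto simp: mem_companion_iff)
  moreover have "(\<Delta>', \<alpha>) \<in> sigma"
    using downward_directedD[OF assms] \<open>(\<Delta>, \<alpha>) \<in> sigma\<close> \<open>\<Delta>' \<subseteq> \<Delta>\<close> .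
  ultimately show "(\<Gamma>, \<alpha>) \<in> companion (companion turnstile sigma) rho"
    by (auto simp: mem_companion_iff)
qed

lemma companion_companion_swap:
  assumes "downward_directed rho" and "downward_directed sigma"
  shows "companion (companion turnstile rho) sigma = companion (companion turnstile sigma) rho"
  using companion_companion_subset_swap[OF assms(1)] companion_companion_subset_swap[OF assms(2)]
  by (rule antisym[rotated])

theorem theorem3p12:
  fixes turnstile rho sigma :: "'a cons_rel"
  shows "(downward_directed sigma \<longrightarrow>
            companion (companion turnstile rho) sigma \<subseteq> companion (companion turnstile sigma) rho)
       \<and> (downward_directed rho \<and> downward_directed sigma \<longrightarrow>
            companion (companion turnstile rho) sigma = companion (companion turnstile sigma) rho)"
  by (simp add: companion_companion_subset_swap companion_companion_swap)

end
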